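(* Let $U=\ln Z_2-H_S(\underline\theta)$, $T=Z_1/Z_2$ and $\mu=\max\{\theta_1,\theta_2\}/\min\{\theta_1,\theta_2\}\ge1$. For every $t\in(0,1]$, $$\mathbb E_{\underline\theta}[U\mid T=t]=\psi(2\alpha)-k_t(\mu),$$ where $k_t(\mu)=\dfrac{(1+t\mu)^{2\alpha}\ln(1+t/\mu)+(\mu+t)^{2\alpha}\ln(1+t\mu)}{(1+t\mu)^{2\alpha}+(\mu+t)^{2\alpha}}$. Consequently $\sup_{\mu\ge1}\mathbb E_{\underline\theta}[U\mid T=t]=\psi(2\alpha)-\ln(1+t)$.
   Context: Fix a known $\alpha>0$. $X_1,X_2$ are independent, $X_i$ having density $f(x\mid\theta_i)=\frac{x^{\alpha-1}e^{-x/\theta_i}}{\Gamma(\alpha)\theta_i^{\alpha}}$, $x>0$, with unknown $\underline\theta=(\theta_1,\theta_2)\in(0,\infty)^2$. $Z_1=\min\{X_1,X_2\}$, $Z_2=\max\{X_1,X_2\}$. $H_S(\underline\theta)=\ln\theta_1\, I(X_1\ge X_2)+\ln\theta_2\, I(X_1<X_2)$. $\psi$ is the digamma function. *)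

theory Defs
  imports "HOL-Probability.Probability"
begin

definition gamma_dens :: "real \<Rightarrow> real \<Rightarrow> real \<Rightarrow> real" where
  "gamma_dens \<alpha> \<theta> x =
     (if 0 < x then x powr (\<alpha> - 1) * exp (- x / \<theta>) / (Gamma \<alpha> * \<theta> powr \<alpha>) else 0)"

definition k_fun :: "real \<Rightarrow> real \<Rightarrow> real \<Rightarrow> real" where
  "k_fun \<alpha> t \<mu> =
     ((1 + t * \<mu>) powr (2 * \<alpha>) * ln (1 + t / \<mu>) + (\<mu> + t) powr (2 * \<alpha>) * ln (1 + t * \<mu>))
     / ((1 + t * \<mu>) powr (2 * \<alpha>) + (\<mu> + t) powr (2 * \<alpha>))"

end

theory Submission
  imports Defs
begin

text \<open>Conditioning on \<open>T = Z\<^sub>1 / Z\<^sub>2\<close> means integrating, for each value \<open>t\<close> of the ratio, along the ray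
  \<open>{(x, x t)}\<close> (and its mirror image), where \<open>x = Z\<^sub>2\<close> and the Jacobian is \<open>x\<close>. For gamma densities of
  a common shape \<open>\<alpha>\<close>, \<open>x f\<^sub>1(x) f\<^sub>2(x t)\<close> is again a gamma kernel \<open>x\<^sup>2\<^sup>\<alpha>\<^sup>-\<^sup>1 e\<^sup>-\<^sup>c\<^sup>x\<close>, whose integrals
  against \<open>1\<close> and \<open>ln x\<close> are \<open>\<Gamma>(2\<alpha>) c\<^sup>-\<^sup>2\<^sup>\<alpha>\<close> and \<open>\<Gamma>(2\<alpha>) (\<psi>(2\<alpha>) - ln c) c\<^sup>-\<^sup>2\<^sup>\<alpha>\<close> (the latter by
  differentiating \<open>\<Gamma>\<close> under the integral sign). Adding the contributions of the orderings \<open>X\<^sub>1 \<ge> X\<^sub>2\<close> and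
  \<open>X\<^sub>1 < X\<^sub>2\<close>, the weights \<open>c\<^sup>-\<^sup>2\<^sup>\<alpha>\<close> turn the logarithms into the weighted mean \<open>k\<^sub>t(\<mu>)\<close>. That mean is
  at least \<open>ln (1 + t) = k\<^sub>t(1)\<close>, so the supremum over \<open>\<mu> \<ge> 1\<close> is attained at \<open>\<mu> = 1\<close>.\<close>

section \<open>Gamma integrals\<close>

lemma has_bochner_integral_lborel_scale:
  fixes f :: "real \<Rightarrow> real"
  assumes "has_bochner_integral lborel f I" and "c > 0"
  shows "has_bochner_integral lborel (\<lambda>x. f (c * x)) (I / c)"
  using assms lborel_integrable_real_affine[of f c 0] lborel_integral_real_affine[of c f 0]
  by (auto simp: has_bochner_integral_iff field_simps)

lemma has_bochner_integral_Gamma: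
  assumes "s > (0::real)"
  shows "has_bochner_integral lborel (\<lambda>x. indicator {0<..} x * (x powr (s - 1) * exp (- x))) (Gamma s)"
proof (rule has_bochner_integral_nn_integral)
  have "indicator {0<..} x * (x powr (s - 1) * exp (- x)) = indicator {0..} x * x powr (s - 1) / exp x" for x
    by (auto simp: indicator_def exp_minus field_simps)
  then show "(\<integral>\<^sup>+x. ennreal (indicator {0<..} x * (x powr (s - 1) * exp (- x))) \<partial>lborel) = ennreal (Gamma s)"
    by (simp only:) (rule Gamma_conv_nn_integral_real[OF assms, symmetric])
qed (use assms in \<open>auto simp: Gamma_real_pos less_imp_le\<close>)

lemma has_bochner_integral_Gamma_scaled:
  assumes s: "s > (0::real)" and c: "c > 0"
  shows "has_bochner_integral lborel (\<lambda>x. indicator {0<..} x * (x powr (s - 1) * exp (- (c * x)))) (Gamma s / c powr s)"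
proof -
  have "has_bochner_integral lborel
      (\<lambda>x. indicator {0<..} (c * x) * ((c * x) powr (s - 1) * exp (- (c * x))) / c powr (s - 1))
      (Gamma s / c / c powr (s - 1))"
    using has_bochner_integral_lborel_scale[OF has_bochner_integral_Gamma[OF s] c] by (rule has_bochner_integral_divide)
  moreover have "Gamma s / c / c powr (s - 1) = Gamma s / c powr s"
    using c by (simp add: powr_diff)
  ultimately show ?thesis
    using c by (simp only:) (simp add: indicator_def powr_mult zero_less_mult_iff)
qed

lemma abs_exp_minus_one_le: "\<bar>exp y - 1\<bar> \<le> \<bar>y\<bar> * exp \<bar>y\<bar>" for y :: real
proof (cases "y \<ge> 0")
  case True
  have "(1 - y) * exp y \<le> exp (- y) * exp y"
    using exp_ge_add_one_self[of "- y"] by (intro mult_right_mono) auto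
  then show ?thesis using True by (simp add: exp_minus algebra_simps)
next
  case False
  have "- y \<le> - y * exp (- y)" using False by (simp add: mult_le_cancel_left1)
  then have "1 - exp y \<le> - y * exp (- y)" using exp_ge_add_one_self[of y] by linarith
  then show ?thesis using False by (simp add: abs_if)
qed

lemma abs_exp_difference_quotient_le:
  fixes h \<delta> u :: real
  assumes "0 < h" "h \<le> \<delta>"
  shows "\<bar>exp (h * u) - 1\<bar> / h \<le> (exp (2 * \<delta> * u) + exp (- (2 * \<delta> * u))) / \<delta>"
proof -
  have \<delta>: "\<delta> > 0" using assms by simp
  have "\<bar>exp (h * u) - 1\<bar> / h \<le> \<bar>u\<bar> * exp (h * \<bar>u\<bar>)"
    using abs_exp_minus_one_le[of "h * u"] assms by (simp add: abs_mult divide_le_eq mult_ac)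
  also have "\<dots> \<le> (exp (\<delta> * \<bar>u\<bar>) / \<delta>) * exp (\<delta> * \<bar>u\<bar>)"
  proof (intro mult_mono)
    have "\<delta> * \<bar>u\<bar> \<le> exp (\<delta> * \<bar>u\<bar>)" using exp_ge_add_one_self[of "\<delta> * \<bar>u\<bar>"] by linarith
    then show "\<bar>u\<bar> \<le> exp (\<delta> * \<bar>u\<bar>) / \<delta>" using \<delta> by (simp add: le_divide_eq mult_ac)
  qed (use assms in \<open>auto simp: mult_right_mono\<close>)
  also have "\<dots> = exp (2 * \<delta> * \<bar>u\<bar>) / \<delta>" by (simp add: exp_add[symmetric])
  also have "\<dots> \<le> (exp (2 * \<delta> * u) + exp (- (2 * \<delta> * u))) / \<delta>"
    using \<delta> by (intro divide_right_mono) (auto simp: abs_if add_increasing add_increasing2)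
  finally show ?thesis .
qed

lemma abs_powr_difference_quotient_le:
  fixes x h \<delta> s :: real
  assumes "x > 0" "0 < h" "h \<le> \<delta>"
  shows "\<bar>x powr (s + h - 1) - x powr (s - 1)\<bar> / h \<le> (x powr (s + 2 * \<delta> - 1) + x powr (s - 2 * \<delta> - 1)) / \<delta>"
proof -
  have e: "x powr a = exp (a * ln x)" for a using assms by (simp add: powr_def mult_ac)
  have "x powr (s + h - 1) - x powr (s - 1) = x powr (s - 1) * (exp (h * ln x) - 1)"
    by (simp add: e exp_add[symmetric] algebra_simps)
  then have "\<bar>x powr (s + h - 1) - x powr (s - 1)\<bar> / h = x powr (s - 1) * (\<bar>exp (h * ln x) - 1\<bar> / h)"
    by (simp add: abs_mult)
  also have "\<dots> \<le> x powr (s - 1) * ((exp (2 * \<delta> * ln x) + exp (- (2 * \<delta> * ln x))) / \<delta>)"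
    using abs_exp_difference_quotient_le[OF assms(2,3)] by (intro mult_left_mono) auto
  also have "\<dots> = (x powr (s + 2 * \<delta> - 1) + x powr (s - 2 * \<delta> - 1)) / \<delta>"
    by (simp add: e exp_add[symmetric] algebra_simps add_divide_distrib)
  finally show ?thesis .
qed

lemma DERIV_LIMSEQ_difference_quotient:
  fixes f :: "real \<Rightarrow> real"
  assumes "(f has_real_derivative D) (at a)" "h \<longlonglongrightarrow> 0" "\<And>n. h n \<noteq> 0"
  shows "(\<lambda>n. (f (a + h n) - f a) / h n) \<longlonglongrightarrow> D"
proof -
  have "((\<lambda>h. (f (a + h) - f a) / h) \<longlongrightarrow> D) (at 0)" using assms(1) by (simp add: DERIV_def)
  with assms(2,3) show ?thesis
    unfolding tendsto_at_iff_sequentially[where s=UNIV] by (auto simp: o_def)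
qed

text \<open>Differentiation of \<open>\<Gamma>\<close> under the integral sign along \<open>h n = \<delta> / (n + 1)\<close>: the difference
  quotients \<open>q n\<close> are dominated by \<open>w\<close>, built from the integrands at \<open>s \<pm> 2 \<delta>\<close>.\<close>

lemma has_bochner_integral_Gamma_ln:
  assumes s: "s > (0::real)"
  shows "has_bochner_integral lborel (\<lambda>x. indicator {0<..} x * (x powr (s - 1) * ln x * exp (- x))) (Gamma s * Digamma s)"
proof -
  define \<delta> where "\<delta> = s / 4"
  have \<delta>: "\<delta> > 0" using s by (simp add: \<delta>_def)
  define h where "h n = \<delta> / (real n + 1)" for n
  have h_pos: "h n > 0" and h_le: "h n \<le> \<delta>" for n
    using \<delta> by (simp_all add: h_def divide_le_eq)
  then have h_nonzero: "h n \<noteq> 0" for n by (metis less_irrefl)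
  have h_lim: "h \<longlonglongrightarrow> 0"
    using LIMSEQ_Suc[OF lim_const_over_n[of \<delta>]] unfolding h_def by (simp add: add.commute)
  define G where "G a x = indicator {0<..} x * (x powr (a - 1) * exp (- x))" for a x :: real
  define q where "q n x = (G (s + h n) x - G s x) / h n" for n x
  define f where "f x = indicator {0<..} x * (x powr (s - 1) * ln x * exp (- x))" for x :: real
  define w where "w x = (G (s + 2 * \<delta>) x + G (s - 2 * \<delta>) x) / \<delta>" for x
  have G_integrable: "integrable lborel (G a)" and G_integral: "integral\<^sup>L lborel (G a) = Gamma a"
    if "a > 0" for a
    using has_bochner_integral_Gamma[OF that] unfolding G_def has_bochner_integral_iff by auto
  have q_integral: "integral\<^sup>L lborel (q n) = (Gamma (s + h n) - Gamma s) / h n" for n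
    using s h_pos[of n] by (simp add: q_def[abs_def] G_integrable G_integral)
  have w_integrable: "integrable lborel w"
    using s by (simp add: w_def[abs_def] G_integrable \<delta>_def)
  have q_lim: "(\<lambda>n. q n x) \<longlonglongrightarrow> f x" for x
  proof (cases "x > 0")
    case True
    have "((\<lambda>a. x powr (a - 1) * exp (- x)) has_real_derivative (1 * ln x * x powr (s - 1)) * exp (- x)) (at s)"
      using True by (auto intro!: derivative_eq_intros)
    from DERIV_LIMSEQ_difference_quotient[OF this h_lim h_nonzero] show ?thesis
      using True by (simp add: q_def G_def f_def mult_ac)
  qed (simp add: q_def G_def f_def)
  have q_bound: "norm (q n x) \<le> w x" for n x
  proof (cases "x > 0")
    case True
    have "norm (q n x) = exp (- x) * (\<bar>x powr (s + h n - 1) - x powr (s - 1)\<bar> / h n)"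
      using True h_pos[of n] by (simp add: q_def G_def abs_mult diff_divide_distrib flip: left_diff_distrib)
    also have "\<dots> \<le> exp (- x) * ((x powr (s + 2 * \<delta> - 1) + x powr (s - 2 * \<delta> - 1)) / \<delta>)"
      using abs_powr_difference_quotient_le[OF True h_pos h_le] by (intro mult_left_mono) auto
    also have "\<dots> = w x"
      using True by (simp add: w_def G_def algebra_simps add_divide_distrib)
    finally show ?thesis .
  qed (simp add: q_def G_def w_def)
  have [measurable]: "f \<in> borel_measurable lborel" "\<And>n. q n \<in> borel_measurable lborel"
    unfolding f_def q_def G_def by measurable
  have "integrable lborel f"
    by (rule integrable_dominated_convergence[where s=q, OF _ _ w_integrable])
       (use q_lim q_bound in auto)
  moreover have "(\<lambda>n. integral\<^sup>L lborel (q n)) \<longlonglongrightarrow> integral\<^sup>L lborel f"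
    by (rule integral_dominated_convergence[where s=q, OF _ _ w_integrable])
       (use q_lim q_bound in auto)
  moreover have "(\<lambda>n. integral\<^sup>L lborel (q n)) \<longlonglongrightarrow> Gamma s * Digamma s"
  proof -
    have "(Gamma has_real_derivative Gamma s * Digamma s) (at s)"
      using s by (intro has_field_derivative_Gamma) (auto elim!: nonpos_Ints_cases)
    from DERIV_LIMSEQ_difference_quotient[OF this h_lim h_nonzero] show ?thesis
      by (simp add: q_integral)
  qed
  ultimately show ?thesis
    using LIMSEQ_unique unfolding f_def has_bochner_integral_iff by blast
qed

lemma has_bochner_integral_Gamma_ln_scaled:
  assumes s: "s > (0::real)" and c: "c > 0"
  shows "has_bochner_integral lborel (\<lambda>x. indicator {0<..} x * (x powr (s - 1) * ln x * exp (- (c * x))))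
           (Gamma s * (Digamma s - ln c) / c powr s)"
proof -
  have "has_bochner_integral lborel
      (\<lambda>x. indicator {0<..} (c * x) * ((c * x) powr (s - 1) * ln (c * x) * exp (- (c * x))) / c powr (s - 1)
         - ln c * (indicator {0<..} x * (x powr (s - 1) * exp (- (c * x)))))
      (Gamma s * Digamma s / c / c powr (s - 1) - ln c * (Gamma s / c powr s))"
    by (intro has_bochner_integral_diff has_bochner_integral_divide has_bochner_integral_mult_right
          has_bochner_integral_lborel_scale[OF has_bochner_integral_Gamma_ln[OF s] c]
          has_bochner_integral_Gamma_scaled[OF s c])
  moreover have "Gamma s * Digamma s / c / c powr (s - 1) - ln c * (Gamma s / c powr s)
      = Gamma s * (Digamma s - ln c) / c powr s"
    using c by (simp add: powr_diff field_simps)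
  moreover have "indicator {0<..} (c * x) * ((c * x) powr (s - 1) * ln (c * x) * exp (- (c * x))) / c powr (s - 1)
         - ln c * (indicator {0<..} x * (x powr (s - 1) * exp (- (c * x))))
      = indicator {0<..} x * (x powr (s - 1) * ln x * exp (- (c * x)))" for x
    using c by (cases "x > 0") (auto simp: powr_mult ln_mult field_simps indicator_def zero_less_mult_iff)
  ultimately show ?thesis by (simp only:)
qed

section \<open>The ratio of two independent variables with densities\<close>

lemma nn_integral_lborel_scale:
  fixes f :: "real \<Rightarrow> ennreal"
  assumes "c > 0" and [measurable]: "f \<in> borel_measurable borel"
  shows "(\<integral>\<^sup>+t. ennreal c * f (c * t) \<partial>lborel) = (\<integral>\<^sup>+y. f y \<partial>lborel)"
  using assms nn_integral_real_affine[of f c 0] by (simp add: nn_integral_cmult)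

lemma integral_lborel_scale:
  fixes f :: "real \<Rightarrow> real"
  assumes "c > 0"
  shows "(\<integral>t. c * f (c * t) \<partial>lborel) = (\<integral>y. f y \<partial>lborel)"
  using assms lborel_integral_real_affine[of c f 0] by simp

text \<open>The shear \<open>(x, t) \<mapsto> (x, x t)\<close> of the right half-plane has Jacobian \<open>x\<close>.\<close>

lemma lborel_pair_ratio_substitution:
  fixes H :: "real \<times> real \<Rightarrow> real"
  assumes [measurable]: "H \<in> borel_measurable (lborel \<Otimes>\<^sub>M lborel)"
    and H_integrable: "integrable (lborel \<Otimes>\<^sub>M lborel) H"
    and H_zero: "\<And>x y. x \<le> 0 \<Longrightarrow> H (x, y) = 0"
  shows "integrable (lborel \<Otimes>\<^sub>M lborel) (\<lambda>(x, t). x * H (x, x * t))"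
    and "integral\<^sup>L (lborel \<Otimes>\<^sub>M lborel) (\<lambda>(x, t). x * H (x, x * t)) = integral\<^sup>L (lborel \<Otimes>\<^sub>M lborel) H"
proof -
  define G where "G = (\<lambda>(x::real, t::real). x * H (x, x * t))"
  have [measurable]: "G \<in> borel_measurable (lborel \<Otimes>\<^sub>M lborel)"
    unfolding G_def by measurable
  have inner_nn: "(\<integral>\<^sup>+t. norm (G (x, t)) \<partial>lborel) = (\<integral>\<^sup>+y. norm (H (x, y)) \<partial>lborel)" for x
  proof (cases "x > 0")
    case True
    then have "(\<integral>\<^sup>+t. norm (G (x, t)) \<partial>lborel) = (\<integral>\<^sup>+t. ennreal x * ennreal (norm (H (x, x * t))) \<partial>lborel)"
      by (intro nn_integral_cong) (simp add: G_def abs_mult ennreal_mult)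
    also have "\<dots> = (\<integral>\<^sup>+y. norm (H (x, y)) \<partial>lborel)"
      using True by (intro nn_integral_lborel_scale) measurable
    finally show ?thesis .
  qed (simp add: G_def H_zero)
  have inner: "(\<integral>t. G (x, t) \<partial>lborel) = (\<integral>y. H (x, y) \<partial>lborel)" for x
    using integral_lborel_scale[of x "\<lambda>y. H (x, y)"] by (cases "x > 0") (simp_all add: G_def H_zero)
  have "(\<integral>\<^sup>+p. norm (G p) \<partial>(lborel \<Otimes>\<^sub>M lborel)) = (\<integral>\<^sup>+x. \<integral>\<^sup>+t. norm (G (x, t)) \<partial>lborel \<partial>lborel)"
    by (rule lborel.nn_integral_fst[symmetric]) measurable
  also have "\<dots> = (\<integral>\<^sup>+x. \<integral>\<^sup>+y. norm (H (x, y)) \<partial>lborel \<partial>lborel)"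
    using inner_nn by simp
  also have "\<dots> = (\<integral>\<^sup>+p. norm (H p) \<partial>(lborel \<Otimes>\<^sub>M lborel))"
    by (rule lborel.nn_integral_fst) measurable
  finally have G_integrable: "integrable (lborel \<Otimes>\<^sub>M lborel) G"
    using H_integrable by (simp add: integrable_iff_bounded)
  then show "integrable (lborel \<Otimes>\<^sub>M lborel) (\<lambda>(x, t). x * H (x, x * t))" by (simp add: G_def)
  have "integral\<^sup>L (lborel \<Otimes>\<^sub>M lborel) G = (\<integral>x. (\<integral>t. G (x, t) \<partial>lborel) \<partial>lborel)"
    by (rule lborel_pair.integral_fst'[OF G_integrable, symmetric])
  also have "\<dots> = integral\<^sup>L (lborel \<Otimes>\<^sub>M lborel) H"
    by (simp add: inner lborel_pair.integral_fst'[OF H_integrable])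
  finally show "integral\<^sup>L (lborel \<Otimes>\<^sub>M lborel) (\<lambda>(x, t). x * H (x, x * t)) = integral\<^sup>L (lborel \<Otimes>\<^sub>M lborel) H"
    by (simp add: G_def)
qed

lemma (in prob_space) indep_set_commute: "indep_set A B \<Longrightarrow> indep_set B A"
  unfolding indep_sets2_eq by (metis Int_commute mult.commute)

lemma (in prob_space) indep_var_commute: "indep_var S X T Y \<Longrightarrow> indep_var T Y S X"
  unfolding indep_var_eq using indep_set_commute by blast

lemma (in prob_space) integral_indep_densities:
  fixes X Y :: "'a \<Rightarrow> real" and fX fY :: "real \<Rightarrow> real" and F :: "real \<times> real \<Rightarrow> real"
  assumes "distributed M lborel X (\<lambda>x. ennreal (fX x))" "distributed M lborel Y (\<lambda>y. ennreal (fY y))"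
    and "\<And>x. 0 \<le> fX x" "\<And>y. 0 \<le> fY y" and "indep_var borel X borel Y"
    and [measurable]: "F \<in> borel_measurable (lborel \<Otimes>\<^sub>M lborel)"
    and "integrable M (\<lambda>\<omega>. F (X \<omega>, Y \<omega>))"
  shows "integrable (lborel \<Otimes>\<^sub>M lborel) (\<lambda>(x, y). fX x * fY y * F (x, y))"
    and "(\<integral>(x, y). fX x * fY y * F (x, y) \<partial>(lborel \<Otimes>\<^sub>M lborel)) = (\<integral>\<omega>. F (X \<omega>, Y \<omega>) \<partial>M)"
proof -
  have "indep_var lborel X lborel Y"
    using indep_var_compose[OF assms(5), of id lborel id lborel] by (simp add: comp_def)
  then have "distributed M (lborel \<Otimes>\<^sub>M lborel) (\<lambda>\<omega>. (X \<omega>, Y \<omega>)) (\<lambda>(x, y). ennreal (fX x) * ennreal (fY y))"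
    by (intro distributed_joint_indep assms(1,2)) (auto intro: lborel.sigma_finite_measure_axioms)
  then have joint: "distributed M (lborel \<Otimes>\<^sub>M lborel) (\<lambda>\<omega>. (X \<omega>, Y \<omega>)) (\<lambda>p. ennreal (fX (fst p) * fY (snd p)))"
    by (simp add: split_beta' ennreal_mult'[symmetric] assms(3,4))
  show "integrable (lborel \<Otimes>\<^sub>M lborel) (\<lambda>(x, y). fX x * fY y * F (x, y))"
    using distributed_integrable[OF joint, of F] assms(3,4,7) by (simp add: split_beta')
  show "(\<integral>(x, y). fX x * fY y * F (x, y) \<partial>(lborel \<Otimes>\<^sub>M lborel)) = (\<integral>\<omega>. F (X \<omega>, Y \<omega>) \<partial>M)"
    using distributed_integral[OF joint, of F] assms(3,4) by (simp add: split_beta')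
qed

lemma (in prob_space) integral_ratio_indep_densities:
  fixes X Y :: "'a \<Rightarrow> real" and fX fY :: "real \<Rightarrow> real" and \<Phi> :: "real \<times> real \<Rightarrow> real"
  assumes DX: "distributed M lborel X (\<lambda>x. ennreal (fX x))"
    and DY: "distributed M lborel Y (\<lambda>y. ennreal (fY y))"
    and fX: "\<And>x. 0 \<le> fX x" and fY: "\<And>y. 0 \<le> fY y"
    and [measurable]: "fX \<in> borel_measurable borel" "fY \<in> borel_measurable borel"
    and ind: "indep_var borel X borel Y"
    and [measurable]: "\<Phi> \<in> borel_measurable borel"
    and int: "integrable M (\<lambda>\<omega>. indicator {0<..} (X \<omega>) * \<Phi> (X \<omega>, Y \<omega> / X \<omega>))"
  shows "integrable lborel (\<lambda>t. \<integral>x. indicator {0<..} x * x * fX x * fY (x * t) * \<Phi> (x, t) \<partial>lborel)"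
    and "(\<integral>\<omega>. indicator {0<..} (X \<omega>) * \<Phi> (X \<omega>, Y \<omega> / X \<omega>) \<partial>M)
          = (\<integral>t. (\<integral>x. indicator {0<..} x * x * fX x * fY (x * t) * \<Phi> (x, t) \<partial>lborel) \<partial>lborel)"
proof -
  define F where "F = (\<lambda>(x, y). indicator {0<..} x * \<Phi> (x, y / x) :: real)"
  define H where "H = (\<lambda>(x, y). fX x * fY y * F (x, y))"
  define G where "G = (\<lambda>(x, t). indicator {0<..} x * x * fX x * fY (x * t) * \<Phi> (x, t) :: real)"
  have [measurable]: "F \<in> borel_measurable (lborel \<Otimes>\<^sub>M lborel)" "H \<in> borel_measurable (lborel \<Otimes>\<^sub>M lborel)"
    "G \<in> borel_measurable (lborel \<Otimes>\<^sub>M lborel)"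
    unfolding F_def H_def G_def by measurable
  have "integrable M (\<lambda>\<omega>. F (X \<omega>, Y \<omega>))" using int by (simp add: F_def)
  note H = integral_indep_densities[OF DX DY fX fY ind _ this, folded H_def]
  have "(\<lambda>(x, t). x * H (x, x * t)) = G"
    by (auto simp: G_def H_def F_def fun_eq_iff indicator_def)
  with lborel_pair_ratio_substitution[of H] H have
    G_integrable: "integrable (lborel \<Otimes>\<^sub>M lborel) G" and
    G_integral: "integral\<^sup>L (lborel \<Otimes>\<^sub>M lborel) G = (\<integral>\<omega>. indicator {0<..} (X \<omega>) * \<Phi> (X \<omega>, Y \<omega> / X \<omega>) \<partial>M)"
    by (auto simp: H_def F_def)
  have swap_integrable: "integrable (lborel \<Otimes>\<^sub>M lborel) (\<lambda>(t, x). G (x, t))"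
    using lborel_pair.integrable_product_swap_iff[of G] G_integrable by simp
  then show "integrable lborel (\<lambda>t. \<integral>x. indicator {0<..} x * x * fX x * fY (x * t) * \<Phi> (x, t) \<partial>lborel)"
    using lborel_pair.integrable_fst'[OF swap_integrable] by (simp add: G_def)
  have "(\<integral>t. (\<integral>x. G (x, t) \<partial>lborel) \<partial>lborel) = (\<integral>(t, x). G (x, t) \<partial>(lborel \<Otimes>\<^sub>M lborel))"
    using lborel_pair.integral_fst'[OF swap_integrable] by simp
  also have "\<dots> = integral\<^sup>L (lborel \<Otimes>\<^sub>M lborel) G"
    by (rule lborel_pair.integral_product_swap) measurable
  finally show "(\<integral>\<omega>. indicator {0<..} (X \<omega>) * \<Phi> (X \<omega>, Y \<omega> / X \<omega>) \<partial>M)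
          = (\<integral>t. (\<integral>x. indicator {0<..} x * x * fX x * fY (x * t) * \<Phi> (x, t) \<partial>lborel) \<partial>lborel)"
    using G_integral by (simp add: G_def)
qed

section \<open>Pairs of gamma densities\<close>

lemma gamma_dens_nonneg: "\<alpha> > 0 \<Longrightarrow> \<theta> > 0 \<Longrightarrow> 0 \<le> gamma_dens \<alpha> \<theta> x"
  by (simp add: gamma_dens_def Gamma_real_pos less_imp_le)

lemma gamma_dens_measurable[measurable]: "gamma_dens \<alpha> \<theta> \<in> borel_measurable borel"
  unfolding gamma_dens_def by measurable

lemma (in prob_space) AE_gamma_distributed_pos:
  assumes "distributed M lborel X (\<lambda>x. ennreal (gamma_dens \<alpha> \<theta> x))"
  shows "AE \<omega> in M. X \<omega> > 0"
proof -
  have "AE x in density lborel (\<lambda>x. ennreal (gamma_dens \<alpha> \<theta> x)). x > 0"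
    by (subst AE_density) (auto simp: gamma_dens_def)
  then have "AE x in distr M lborel X. x > 0"
    unfolding distributed_distr_eq_density[OF assms] .
  then show ?thesis using AE_distrD[OF distributed_measurable[OF assms]] by blast
qed

lemma (in prob_space) integrable_ln_gamma_distributed:
  assumes "\<alpha> > 0" "\<theta> > 0" and D: "distributed M lborel X (\<lambda>x. ennreal (gamma_dens \<alpha> \<theta> x))"
  shows "integrable M (\<lambda>\<omega>. ln (X \<omega>))"
proof -
  have "integrable lborel (\<lambda>x. indicator {0<..} x * (x powr (\<alpha> - 1) * ln x * exp (- ((1 / \<theta>) * x))))"
    using has_bochner_integral_Gamma_ln_scaled[of \<alpha> "1 / \<theta>"] assms by (simp add: has_bochner_integral_iff)
  then have "integrable lborel (\<lambda>x. (1 / (Gamma \<alpha> * \<theta> powr \<alpha>)) *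
      (indicator {0<..} x * (x powr (\<alpha> - 1) * ln x * exp (- ((1 / \<theta>) * x)))))"
    by simp
  also have "(\<lambda>x. (1 / (Gamma \<alpha> * \<theta> powr \<alpha>)) *
      (indicator {0<..} x * (x powr (\<alpha> - 1) * ln x * exp (- ((1 / \<theta>) * x)))))
     = (\<lambda>x. gamma_dens \<alpha> \<theta> x * ln x)"
    by (auto simp: gamma_dens_def fun_eq_iff indicator_def)
  finally have "integrable lborel (\<lambda>x. gamma_dens \<alpha> \<theta> x * ln x)" .
  then show ?thesis
    using distributed_integrable[OF D, of ln] gamma_dens_nonneg[OF assms(1,2)] by simp
qed

text \<open>The value of \<open>\<integral>\<^sub>0\<^sup>\<infinity> x f\<^sub>a(x) f\<^sub>b(x t) (p + q ln x) dx\<close> for the gamma densities \<open>f\<^sub>a, f\<^sub>b\<close>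
  of shape \<open>\<alpha>\<close> and scales \<open>a, b\<close>.\<close>

definition gamma_ratio_moment :: "real \<Rightarrow> real \<Rightarrow> real \<Rightarrow> real \<Rightarrow> real \<Rightarrow> real \<Rightarrow> real" where
  "gamma_ratio_moment \<alpha> a b t p q = t powr (\<alpha> - 1) / (Gamma \<alpha> * a powr \<alpha> * (Gamma \<alpha> * b powr \<alpha>)) *
     (Gamma (2 * \<alpha>) / (1 / a + t / b) powr (2 * \<alpha>)) * (p + q * (Digamma (2 * \<alpha>) - ln (1 / a + t / b)))"

lemma gamma_dens_product:
  assumes "\<alpha> > 0" "a > 0" "b > 0" "t > 0" "x > 0"
  shows "x * gamma_dens \<alpha> a x * gamma_dens \<alpha> b (x * t)
     = t powr (\<alpha> - 1) / (Gamma \<alpha> * a powr \<alpha> * (Gamma \<alpha> * b powr \<alpha>)) *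
       (x powr (2 * \<alpha> - 1) * exp (- ((1 / a + t / b) * x)))"
proof -
  have "x powr (2 * \<alpha> - 1) = x * (x powr (\<alpha> - 1) * x powr (\<alpha> - 1))"
    using assms by (simp add: powr_add[symmetric] powr_mult_base)
  moreover have "exp (- ((1 / a + t / b) * x)) = exp (- x / a) * exp (- (x * t) / b)"
    by (simp add: exp_add[symmetric] field_simps)
  moreover have "(x * t) powr (\<alpha> - 1) = x powr (\<alpha> - 1) * t powr (\<alpha> - 1)"
    using assms by (simp add: powr_mult)
  ultimately show ?thesis
    using assms by (simp add: gamma_dens_def Gamma_real_pos)
qed

lemma integral_gamma_dens_product_ln:
  assumes \<alpha>: "\<alpha> > 0" and a: "a > 0" and b: "b > 0" and t: "t > 0"
  shows "(\<integral>x. indicator {0<..} x * x * gamma_dens \<alpha> a x * gamma_dens \<alpha> b (x * t) * (p + q * ln x) \<partial>lborel)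
     = gamma_ratio_moment \<alpha> a b t p q"
proof -
  define c where "c = 1 / a + t / b"
  have c: "c > 0" using a b t unfolding c_def by (intro add_pos_pos) auto
  define C where "C = t powr (\<alpha> - 1) / (Gamma \<alpha> * a powr \<alpha> * (Gamma \<alpha> * b powr \<alpha>))"
  define E0 where "E0 x = indicator {0<..} x * (x powr (2 * \<alpha> - 1) * exp (- (c * x)))" for x :: real
  define E1 where "E1 x = indicator {0<..} x * (x powr (2 * \<alpha> - 1) * ln x * exp (- (c * x)))" for x :: real
  have E0: "integrable lborel E0" "integral\<^sup>L lborel E0 = Gamma (2 * \<alpha>) / c powr (2 * \<alpha>)"
    using has_bochner_integral_Gamma_scaled[of "2 * \<alpha>" c] \<alpha> c
    unfolding E0_def[abs_def] has_bochner_integral_iff by auto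
  have E1: "integrable lborel E1" "integral\<^sup>L lborel E1 = Gamma (2 * \<alpha>) * (Digamma (2 * \<alpha>) - ln c) / c powr (2 * \<alpha>)"
    using has_bochner_integral_Gamma_ln_scaled[of "2 * \<alpha>" c] \<alpha> c
    unfolding E1_def[abs_def] has_bochner_integral_iff by auto
  have "indicator {0<..} x * x * gamma_dens \<alpha> a x * gamma_dens \<alpha> b (x * t) * (p + q * ln x)
      = C * (p * E0 x + q * E1 x)" for x
    using gamma_dens_product[OF \<alpha> a b t, of x]
    by (cases "x > 0") (simp_all add: E0_def E1_def C_def c_def algebra_simps add_divide_distrib)
  then have "(\<integral>x. indicator {0<..} x * x * gamma_dens \<alpha> a x * gamma_dens \<alpha> b (x * t) * (p + q * ln x) \<partial>lborel)
      = C * (p * integral\<^sup>L lborel E0 + q * integral\<^sup>L lborel E1)"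
    using E0(1) E1(1) by simp
  also have "\<dots> = gamma_ratio_moment \<alpha> a b t p q"
    by (simp add: E0(2) E1(2) gamma_ratio_moment_def C_def c_def algebra_simps add_divide_distrib diff_divide_distrib)
  finally show ?thesis .
qed

text \<open>On \<open>{Y \<le> X}\<close> the ratio \<open>Y / X\<close> is \<open>T\<close> and \<open>X\<close> is \<open>Z\<^sub>2\<close>; the two orderings of \<open>(X\<^sub>1, X\<^sub>2)\<close>
  contribute one such piece each, and \<open>S\<close> carries the event \<open>T \<in> B\<close>.\<close>

definition ratio_piece ::
    "('a \<Rightarrow> real) \<Rightarrow> ('a \<Rightarrow> real) \<Rightarrow> real set \<Rightarrow> (real \<Rightarrow> real) \<Rightarrow> real \<Rightarrow> 'a \<Rightarrow> real" where
  "ratio_piece X Y S p q \<omega> =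
     indicator {0<..} (X \<omega>) * (indicator S (Y \<omega> / X \<omega>) * (p (Y \<omega> / X \<omega>) + q * ln (X \<omega>)))"

lemma (in prob_space) integral_gamma_ratio_piece:
  fixes X Y :: "'a \<Rightarrow> real" and p :: "real \<Rightarrow> real" and S :: "real set" and q K :: real
  assumes \<alpha>: "\<alpha> > 0" and a: "a > 0" and b: "b > 0"
    and DX: "distributed M lborel X (\<lambda>x. ennreal (gamma_dens \<alpha> a x))"
    and DY: "distributed M lborel Y (\<lambda>y. ennreal (gamma_dens \<alpha> b y))"
    and ind: "indep_var borel X borel Y"
    and [measurable]: "S \<in> sets borel" and S_pos: "S \<subseteq> {0<..}"
    and [measurable]: "p \<in> borel_measurable borel" and p_bound: "\<And>t. t \<in> S \<Longrightarrow> \<bar>p t\<bar> \<le> K"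
  shows "integrable M (ratio_piece X Y S p q)"
    and "integrable lborel (\<lambda>t. indicator S t * gamma_ratio_moment \<alpha> a b t (p t) q)"
    and "integral\<^sup>L M (ratio_piece X Y S p q) = (\<integral>t. indicator S t * gamma_ratio_moment \<alpha> a b t (p t) q \<partial>lborel)"
proof -
  define \<Phi> where "\<Phi> = (\<lambda>(x, t). indicator S t * (p t + q * ln x) :: real)"
  have [measurable]: "\<Phi> \<in> borel_measurable borel"
    unfolding \<Phi>_def borel_prod[symmetric] by measurable
  have [measurable]: "X \<in> borel_measurable M" "Y \<in> borel_measurable M"
    using distributed_measurable[OF DX] distributed_measurable[OF DY] by simp_all
  have Z_eq: "ratio_piece X Y S p q = (\<lambda>\<omega>. indicator {0<..} (X \<omega>) * \<Phi> (X \<omega>, Y \<omega> / X \<omega>))"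
    by (simp add: ratio_piece_def \<Phi>_def fun_eq_iff)
  have bound: "\<bar>p t + q * ln x\<bar> \<le> \<bar>K\<bar> + \<bar>q\<bar> * \<bar>ln x\<bar>" if "t \<in> S" for t x
    using p_bound[OF that] abs_triangle_ineq[of "p t" "q * ln x"] by (simp add: abs_mult)
  show Z_integrable: "integrable M (ratio_piece X Y S p q)"
  proof (rule Bochner_Integration.integrable_bound)
    show "integrable M (\<lambda>\<omega>. \<bar>K\<bar> + \<bar>q\<bar> * \<bar>ln (X \<omega>)\<bar>)"
      using integrable_ln_gamma_distributed[OF \<alpha> a DX] by simp
    show "AE \<omega> in M. norm (ratio_piece X Y S p q \<omega>) \<le> norm (\<bar>K\<bar> + \<bar>q\<bar> * \<bar>ln (X \<omega>)\<bar>)"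
      using bound by (intro AE_I2) (auto simp: ratio_piece_def indicator_def)
  qed (simp add: Z_eq)
  have inner: "(\<integral>x. indicator {0<..} x * x * gamma_dens \<alpha> a x * gamma_dens \<alpha> b (x * t) * \<Phi> (x, t) \<partial>lborel)
      = indicator S t * gamma_ratio_moment \<alpha> a b t (p t) q" for t
    using integral_gamma_dens_product_ln[OF \<alpha> a b, of t "p t" q] S_pos
    by (cases "t \<in> S") (auto simp: \<Phi>_def mult.assoc)
  note ratio = integral_ratio_indep_densities[OF DX DY gamma_dens_nonneg[OF \<alpha> a] gamma_dens_nonneg[OF \<alpha> b]
      gamma_dens_measurable gamma_dens_measurable ind, of \<Phi>, folded Z_eq, OF _ Z_integrable, unfolded inner]
  show "integrable lborel (\<lambda>t. indicator S t * gamma_ratio_moment \<alpha> a b t (p t) q)"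
    and "integral\<^sup>L M (ratio_piece X Y S p q) = (\<integral>t. indicator S t * gamma_ratio_moment \<alpha> a b t (p t) q \<partial>lborel)"
    using ratio by simp_all
qed

section \<open>The weighted mean \<open>k_fun\<close>\<close>

lemma power2_one_plus_le_mult:
  fixes t \<mu> :: real
  assumes "0 \<le> t" "0 < \<mu>"
  shows "(1 + t) ^ 2 \<le> (1 + t / \<mu>) * (1 + t * \<mu>)"
proof -
  have "0 \<le> (\<mu> - 1)\<^sup>2 / \<mu>" using assms by simp
  also have "\<dots> = \<mu> + 1 / \<mu> - 2" using assms by (simp add: field_simps power2_eq_square)
  finally have "t * 2 \<le> t * (\<mu> + 1 / \<mu>)" using assms by (intro mult_left_mono) auto
  moreover have "(1 + t / \<mu>) * (1 + t * \<mu>) = 1 + t\<^sup>2 + t * (\<mu> + 1 / \<mu>)"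
    using assms by (simp add: field_simps power2_eq_square)
  ultimately show ?thesis by (simp add: power2_eq_square algebra_simps)
qed

text \<open>\<open>k_fun \<alpha> t \<mu>\<close> is a weighted mean of \<open>ln (1 + t / \<mu>) \<le> ln (1 + t \<mu>)\<close> which puts the larger weight on the
  larger value; for \<open>\<mu> \<ge> 1\<close> it therefore dominates the plain mean, and that is at least \<open>ln (1 + t)\<close> since
  \<open>(1 + t / \<mu>) (1 + t \<mu>) \<ge> (1 + t)\<^sup>2\<close>.\<close>

lemma ln_one_plus_le_k_fun:
  assumes "\<alpha> > 0" and t: "0 < t" "t \<le> 1" and \<mu>: "1 \<le> \<mu>"
  shows "ln (1 + t) \<le> k_fun \<alpha> t \<mu>"
proof -
  define A where "A = (1 + t * \<mu>) powr (2 * \<alpha>)"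
  define B where "B = (\<mu> + t) powr (2 * \<alpha>)"
  define L1 where "L1 = ln (1 + t / \<mu>)"
  define L2 where "L2 = ln (1 + t * \<mu>)"
  have pos: "1 + t * \<mu> > 0" "\<mu> + t > 0" "1 + t / \<mu> > 0"
    using t \<mu> by (auto intro: add_pos_pos)
  have "1 + t * \<mu> \<le> \<mu> + t"
    using mult_nonneg_nonneg[of "\<mu> - 1" "1 - t"] t \<mu> by (simp add: algebra_simps)
  then have "A \<le> B" unfolding A_def B_def using assms pos by (intro powr_mono2) auto
  moreover have "L1 \<le> L2"
  proof -
    have "t \<le> t * \<mu>" using mult_left_mono[of 1 \<mu> t] t \<mu> by simp
    moreover from this have "t / \<mu> \<le> t" using \<mu> by (simp add: divide_le_eq)
    ultimately show ?thesis unfolding L1_def L2_def using pos by simp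
  qed
  moreover have "A > 0" "B > 0" unfolding A_def B_def using pos by auto
  ultimately have "(L1 + L2) / 2 \<le> (A * L1 + B * L2) / (A + B)"
    using mult_nonneg_nonneg[of "B - A" "L2 - L1"] by (simp add: field_simps)
  also have "\<dots> = k_fun \<alpha> t \<mu>"
    by (simp add: k_fun_def A_def B_def L1_def L2_def)
  finally have mean_le: "(L1 + L2) / 2 \<le> k_fun \<alpha> t \<mu>" .
  have "(1 + t) ^ 2 \<le> (1 + t / \<mu>) * (1 + t * \<mu>)"
    using t \<mu> by (intro power2_one_plus_le_mult) auto
  then have "ln ((1 + t) ^ 2) \<le> ln ((1 + t / \<mu>) * (1 + t * \<mu>))"
    using t pos by (subst ln_le_cancel_iff) auto
  then have "2 * ln (1 + t) \<le> L1 + L2"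
    unfolding L1_def L2_def using t pos by (simp add: ln_mult ln_realpow)
  with mean_le show ?thesis by simp
qed

lemma k_fun_le_ln_one_plus:
  assumes t: "0 < t" "t \<le> 1" and \<mu>: "1 \<le> \<mu>"
  shows "k_fun \<alpha> t \<mu> \<le> ln (1 + \<mu>)"
proof -
  define A where "A = (1 + t * \<mu>) powr (2 * \<alpha>)"
  define B where "B = (\<mu> + t) powr (2 * \<alpha>)"
  have "t * \<mu> > 0" using t \<mu> by simp
  then have "1 + t * \<mu> > 0" "\<mu> + t > 0" using t \<mu> by linarith+
  then have "A > 0" "B > 0" unfolding A_def B_def by simp_all
  have "t / \<mu> \<le> t" "t * \<mu> \<le> \<mu>"
    using t \<mu> mult_right_mono[of t 1 \<mu>] mult_left_mono[of 1 \<mu> t] by (simp_all add: divide_le_eq)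
  moreover have "t / \<mu> > 0" using t \<mu> by simp
  ultimately have "ln (1 + t / \<mu>) \<le> ln (1 + \<mu>)" "ln (1 + t * \<mu>) \<le> ln (1 + \<mu>)"
    using t \<mu> \<open>t * \<mu> > 0\<close> by (subst ln_le_cancel_iff; linarith)+
  with \<open>A > 0\<close> \<open>B > 0\<close> have "A * ln (1 + t / \<mu>) + B * ln (1 + t * \<mu>) \<le> (A + B) * ln (1 + \<mu>)"
    by (simp add: distrib_right add_mono)
  moreover have "k_fun \<alpha> t \<mu> = (A * ln (1 + t / \<mu>) + B * ln (1 + t * \<mu>)) / (A + B)"
    by (simp add: k_fun_def A_def B_def)
  ultimately show ?thesis
    using \<open>A > 0\<close> \<open>B > 0\<close> by (simp add: divide_le_eq mult.commute)
qed

lemma k_fun_one: "t > -1 \<Longrightarrow> k_fun \<alpha> t 1 = ln (1 + t)"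
  by (simp add: k_fun_def field_simps)

lemma SUP_Digamma_minus_k_fun:
  assumes "\<alpha> > 0" and t: "0 < t" "t \<le> 1"
  shows "(SUP m\<in>{1..}. Digamma (2 * \<alpha>) - k_fun \<alpha> t m) = Digamma (2 * \<alpha>) - ln (1 + t)"
proof (rule cSup_eq_maximum)
  show "Digamma (2 * \<alpha>) - ln (1 + t) \<in> (\<lambda>m. Digamma (2 * \<alpha>) - k_fun \<alpha> t m) ` {1..}"
    using t k_fun_one[of t \<alpha>] by (intro image_eqI[of _ _ 1]) auto
qed (use ln_one_plus_le_k_fun[OF assms] in auto)

lemma k_fun_weighted_log_identity_ratio:
  assumes "a > 0" "b > 0" "t > 0"
  shows "ln (a * (1 / a + t / b)) / (1 / a + t / b) powr (2 * \<alpha>) + ln (b * (1 / b + t / a)) / (1 / b + t / a) powr (2 * \<alpha>)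
       = (1 / (1 / a + t / b) powr (2 * \<alpha>) + 1 / (1 / b + t / a) powr (2 * \<alpha>)) * k_fun \<alpha> t (a / b)"
proof -
  define \<mu> where "\<mu> = a / b"
  define A where "A = (1 + t * \<mu>) powr (2 * \<alpha>)"
  define B where "B = (\<mu> + t) powr (2 * \<alpha>)"
  have \<mu>: "\<mu> > 0" using assms by (simp add: \<mu>_def)
  then have "t * \<mu> > 0" using assms by simp
  then have "1 + t * \<mu> > 0" "\<mu> + t > 0" using \<mu> assms by linarith+
  then have "A > 0" "B > 0" unfolding A_def B_def by simp_all
  have lin: "a * (1 / a + t / b) = 1 + t * \<mu>" "b * (1 / b + t / a) = 1 + t / \<mu>"
    using assms by (simp_all add: \<mu>_def field_simps)
  have "1 / a + t / b = (1 + t * \<mu>) / a" "1 / b + t / a = (\<mu> + t) / a"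
    using assms by (simp_all add: \<mu>_def field_simps)
  then have pow: "(1 / a + t / b) powr (2 * \<alpha>) = A / a powr (2 * \<alpha>)"
      "(1 / b + t / a) powr (2 * \<alpha>) = B / a powr (2 * \<alpha>)"
    using assms \<mu> by (simp_all add: A_def B_def powr_divide)
  have k: "k_fun \<alpha> t (a / b) = (A * ln (1 + t / \<mu>) + B * ln (1 + t * \<mu>)) / (A + B)"
    by (simp add: k_fun_def A_def B_def \<mu>_def)
  have "x / (A / P) + y / (B / P) = (1 / (A / P) + 1 / (B / P)) * ((A * y + B * x) / (A + B))"
    if "P > 0" for x y P
  proof -
    have "1 / (A / P) + 1 / (B / P) = (A + B) * (P / (A * B))"
      using that \<open>A > 0\<close> \<open>B > 0\<close> by (simp add: field_simps)
    then have "(1 / (A / P) + 1 / (B / P)) * ((A * y + B * x) / (A + B)) = (A * y + B * x) * (P / (A * B))"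
      using \<open>A > 0\<close> \<open>B > 0\<close> by simp
    then show ?thesis
      using that \<open>A > 0\<close> \<open>B > 0\<close> by (simp add: field_simps)
  qed
  then show ?thesis
    unfolding lin pow k using assms by simp
qed

lemma k_fun_weighted_log_identity:
  assumes "a > 0" "b > 0" "t > 0"
  shows "ln (a * (1 / a + t / b)) / (1 / a + t / b) powr (2 * \<alpha>) + ln (b * (1 / b + t / a)) / (1 / b + t / a) powr (2 * \<alpha>)
       = (1 / (1 / a + t / b) powr (2 * \<alpha>) + 1 / (1 / b + t / a) powr (2 * \<alpha>)) * k_fun \<alpha> t (max a b / min a b)"
proof (cases "b \<le> a")
  case True
  then show ?thesis using k_fun_weighted_log_identity_ratio[of a b t] assms by (simp add: max_def min_def)
next
  case False
  then show ?thesis using k_fun_weighted_log_identity_ratio[of b a t] assms by (simp add: max_def min_def add.commute)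
qed

text \<open>At every level \<open>t\<close> of the ratio, \<open>ln Z\<^sub>2 - H\<^sub>S\<close> and the constant \<open>\<psi>(2\<alpha>) - k\<^sub>t(\<mu>)\<close> carry the same
  total weight over the two orderings \<open>X\<^sub>1 \<ge> X\<^sub>2\<close> (first summand) and \<open>X\<^sub>1 < X\<^sub>2\<close> (second summand).\<close>

lemma gamma_ratio_moment_log_balance:
  assumes "\<alpha> > 0" "a > 0" "b > 0" "t > 0"
  defines "c \<equiv> Digamma (2 * \<alpha>) - k_fun \<alpha> t (max a b / min a b)"
  shows "gamma_ratio_moment \<alpha> a b t (- ln a) 1 + gamma_ratio_moment \<alpha> b a t (- ln b) 1
       = gamma_ratio_moment \<alpha> a b t c 0 + gamma_ratio_moment \<alpha> b a t c 0"
proof -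
  define C where "C = t powr (\<alpha> - 1) / (Gamma \<alpha> * a powr \<alpha> * (Gamma \<alpha> * b powr \<alpha>)) * Gamma (2 * \<alpha>)"
  define cA where "cA = 1 / a + t / b"
  define cB where "cB = 1 / b + t / a"
  define uA where "uA = 1 / cA powr (2 * \<alpha>)"
  define uB where "uB = 1 / cB powr (2 * \<alpha>)"
  define \<psi> where "\<psi> = Digamma (2 * \<alpha>)"
  define k where "k = k_fun \<alpha> t (max a b / min a b)"
  have "cA > 0" "cB > 0" using assms by (auto simp: cA_def cB_def intro!: add_pos_pos)
  then have ln_split: "ln (a * cA) = ln a + ln cA" "ln (b * cB) = ln b + ln cB"
    using assms by (simp_all add: ln_mult)
  have A: "gamma_ratio_moment \<alpha> a b t p q = C * uA * (p + q * (\<psi> - ln cA))" for p q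
    by (simp add: gamma_ratio_moment_def C_def uA_def cA_def \<psi>_def)
  have B: "gamma_ratio_moment \<alpha> b a t p q = C * uB * (p + q * (\<psi> - ln cB))" for p q
    by (simp add: gamma_ratio_moment_def C_def uB_def cB_def \<psi>_def mult_ac)
  have "C * uA * (- ln a + 1 * (\<psi> - ln cA)) + C * uB * (- ln b + 1 * (\<psi> - ln cB))
      = C * ((uA + uB) * \<psi> - (uA * ln (a * cA) + uB * ln (b * cB)))"
    unfolding ln_split by (simp add: algebra_simps)
  also have "uA * ln (a * cA) + uB * ln (b * cB) = (uA + uB) * k"
    using k_fun_weighted_log_identity[OF assms(2-4), of \<alpha>]
    by (simp add: uA_def uB_def cA_def cB_def k_def)
  finally show ?thesis
    unfolding A B c_def \<psi>_def[symmetric] k_def[symmetric] by (simp add: algebra_simps)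
qed

section \<open>Conditioning on the ratio of the order statistics\<close>

locale gamma_pair = prob_space +
  fixes X1 X2 :: "'a \<Rightarrow> real" and \<alpha> \<theta>1 \<theta>2 :: real
  assumes alpha_pos: "0 < \<alpha>" and theta1_pos: "0 < \<theta>1" and theta2_pos: "0 < \<theta>2"
    and distributed_X1: "distributed M lborel X1 (\<lambda>x. ennreal (gamma_dens \<alpha> \<theta>1 x))"
    and distributed_X2: "distributed M lborel X2 (\<lambda>x. ennreal (gamma_dens \<alpha> \<theta>2 x))"
    and indep_X1_X2: "indep_var borel X1 borel X2"
begin

definition scaled_log_max :: "'a \<Rightarrow> real" where
  "scaled_log_max \<omega> = ln (max (X1 \<omega>) (X2 \<omega>)) - (if X1 \<omega> \<ge> X2 \<omega> then ln \<theta>1 else ln \<theta>2)"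

definition min_max_ratio :: "'a \<Rightarrow> real" where
  "min_max_ratio \<omega> = min (X1 \<omega>) (X2 \<omega>) / max (X1 \<omega>) (X2 \<omega>)"

definition cond_mean :: "real \<Rightarrow> real" where
  "cond_mean t = Digamma (2 * \<alpha>) - k_fun \<alpha> t (max \<theta>1 \<theta>2 / min \<theta>1 \<theta>2)"

lemma measurable_X [measurable]: "X1 \<in> borel_measurable M" "X2 \<in> borel_measurable M"
  using distributed_measurable[OF distributed_X1] distributed_measurable[OF distributed_X2] by simp_all

lemma measurable_statistics [measurable]:
  "scaled_log_max \<in> borel_measurable M" "min_max_ratio \<in> borel_measurable M" "cond_mean \<in> borel_measurable borel"
  unfolding scaled_log_max_def[abs_def] min_max_ratio_def[abs_def] cond_mean_def[abs_def] k_fun_def by measurable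

lemma AE_X_pos: "AE \<omega> in M. 0 < X1 \<omega> \<and> 0 < X2 \<omega>"
  using AE_gamma_distributed_pos[OF distributed_X1] AE_gamma_distributed_pos[OF distributed_X2] by auto

lemma AE_min_max_ratio: "AE \<omega> in M. min_max_ratio \<omega> \<in> {0<..1}"
  using AE_X_pos by eventually_elim (auto simp: min_max_ratio_def min_def max_def)

lemma abs_cond_mean_le:
  assumes "t \<in> {0<..1}"
  shows "\<bar>cond_mean t\<bar> \<le> \<bar>Digamma (2 * \<alpha>)\<bar> + ln (1 + max \<theta>1 \<theta>2 / min \<theta>1 \<theta>2)"
proof -
  have "1 \<le> max \<theta>1 \<theta>2 / min \<theta>1 \<theta>2" using theta1_pos theta2_pos by (simp add: le_divide_eq)
  moreover have "ln (1 + t) \<ge> 0" using assms by simp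
  ultimately show ?thesis
    using assms ln_one_plus_le_k_fun[OF alpha_pos, of t] k_fun_le_ln_one_plus[of t]
    unfolding cond_mean_def by (smt (verit) greaterThanAtMost_iff)
qed

lemma integrable_scaled_log_max: "integrable M scaled_log_max"
proof (rule Bochner_Integration.integrable_bound)
  show "integrable M (\<lambda>\<omega>. \<bar>ln (X1 \<omega>)\<bar> + \<bar>ln (X2 \<omega>)\<bar> + \<bar>ln \<theta>1\<bar> + \<bar>ln \<theta>2\<bar>)"
    using integrable_ln_gamma_distributed[OF alpha_pos theta1_pos distributed_X1]
      integrable_ln_gamma_distributed[OF alpha_pos theta2_pos distributed_X2] by simp
  show "AE \<omega> in M. norm (scaled_log_max \<omega>) \<le> norm (\<bar>ln (X1 \<omega>)\<bar> + \<bar>ln (X2 \<omega>)\<bar> + \<bar>ln \<theta>1\<bar> + \<bar>ln \<theta>2\<bar>)"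
    by (intro AE_I2) (auto simp: scaled_log_max_def max_def)
qed measurable

lemma integrable_cond_mean_min_max_ratio: "integrable M (\<lambda>\<omega>. cond_mean (min_max_ratio \<omega>))"
proof (rule Bochner_Integration.integrable_bound)
  show "AE \<omega> in M. norm (cond_mean (min_max_ratio \<omega>))
      \<le> norm (\<bar>Digamma (2 * \<alpha>)\<bar> + ln (1 + max \<theta>1 \<theta>2 / min \<theta>1 \<theta>2))"
    using AE_min_max_ratio by eventually_elim (auto intro: order_trans[OF abs_cond_mean_le abs_ge_self])
qed simp_all

lemma AE_indicator_ratio_split:
  "AE \<omega> in M. indicator B (min_max_ratio \<omega>) *
      (if X2 \<omega> \<le> X1 \<omega> then p1 (min_max_ratio \<omega>) + q * ln (X1 \<omega>) else p2 (min_max_ratio \<omega>) + q * ln (X2 \<omega>))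
    = ratio_piece X1 X2 ({0<..1} \<inter> B) p1 q \<omega> + ratio_piece X2 X1 ({0<..<1} \<inter> B) p2 q \<omega>"
  using AE_X_pos
proof eventually_elim
  case (elim \<omega>)
  show ?case
  proof (cases "X2 \<omega> \<le> X1 \<omega>")
    case True
    then have "0 < X2 \<omega> / X1 \<omega>" "X2 \<omega> / X1 \<omega> \<le> 1" "\<not> X1 \<omega> / X2 \<omega> < 1" "min_max_ratio \<omega> = X2 \<omega> / X1 \<omega>"
      using elim by (auto simp: min_max_ratio_def)
    then show ?thesis using True elim by (simp add: ratio_piece_def indicator_def)
  next
    case False
    then have "0 < X1 \<omega> / X2 \<omega>" "X1 \<omega> / X2 \<omega> < 1" "\<not> X2 \<omega> / X1 \<omega> \<le> 1" "min_max_ratio \<omega> = X1 \<omega> / X2 \<omega>"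
      using elim by (auto simp: min_max_ratio_def)
    then show ?thesis using False elim by (simp add: ratio_piece_def indicator_def)
  qed
qed

lemma integral_indicator_ratio:
  assumes [measurable]: "B \<in> sets borel" "p1 \<in> borel_measurable borel" "p2 \<in> borel_measurable borel"
    and p_bound: "\<And>t. t \<in> {0<..1} \<Longrightarrow> \<bar>p1 t\<bar> \<le> K" "\<And>t. t \<in> {0<..1} \<Longrightarrow> \<bar>p2 t\<bar> \<le> K"
  shows "(\<integral>\<omega>. indicator B (min_max_ratio \<omega>) *
      (if X2 \<omega> \<le> X1 \<omega> then p1 (min_max_ratio \<omega>) + q * ln (X1 \<omega>) else p2 (min_max_ratio \<omega>) + q * ln (X2 \<omega>)) \<partial>M)
    = (\<integral>t. indicator ({0<..1} \<inter> B) t * gamma_ratio_moment \<alpha> \<theta>1 \<theta>2 t (p1 t) q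
          + indicator ({0<..<1} \<inter> B) t * gamma_ratio_moment \<alpha> \<theta>2 \<theta>1 t (p2 t) q \<partial>lborel)"
proof -
  have bound1: "\<And>t. t \<in> {0<..1} \<inter> B \<Longrightarrow> \<bar>p1 t\<bar> \<le> K"
    and bound2: "\<And>t. t \<in> {0<..<1} \<inter> B \<Longrightarrow> \<bar>p2 t\<bar> \<le> K"
    using p_bound by auto
  have pos: "{0<..1} \<inter> B \<subseteq> {0<..}" "{0<..<1} \<inter> B \<subseteq> {0::real<..}" by auto
  note piece1 = integral_gamma_ratio_piece[where S="{0<..1} \<inter> B" and q=q,
      OF alpha_pos theta1_pos theta2_pos distributed_X1 distributed_X2 indep_X1_X2 _ pos(1) assms(2) bound1]
  note piece2 = integral_gamma_ratio_piece[where S="{0<..<1} \<inter> B" and q=q,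
      OF alpha_pos theta2_pos theta1_pos distributed_X2 distributed_X1 indep_var_commute[OF indep_X1_X2]
        _ pos(2) assms(3) bound2]
  have sum_measurable: "(\<lambda>\<omega>. ratio_piece X1 X2 ({0<..1} \<inter> B) p1 q \<omega> + ratio_piece X2 X1 ({0<..<1} \<inter> B) p2 q \<omega>)
      \<in> borel_measurable M"
    using piece1(1) piece2(1) by (intro borel_measurable_add borel_measurable_integrable) auto
  have "(\<integral>\<omega>. indicator B (min_max_ratio \<omega>) *
      (if X2 \<omega> \<le> X1 \<omega> then p1 (min_max_ratio \<omega>) + q * ln (X1 \<omega>) else p2 (min_max_ratio \<omega>) + q * ln (X2 \<omega>)) \<partial>M)
    = (\<integral>\<omega>. ratio_piece X1 X2 ({0<..1} \<inter> B) p1 q \<omega> + ratio_piece X2 X1 ({0<..<1} \<inter> B) p2 q \<omega> \<partial>M)"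
    by (intro integral_cong_AE AE_indicator_ratio_split sum_measurable) measurable
  also have "\<dots> = (\<integral>\<omega>. ratio_piece X1 X2 ({0<..1} \<inter> B) p1 q \<omega> \<partial>M)
      + (\<integral>\<omega>. ratio_piece X2 X1 ({0<..<1} \<inter> B) p2 q \<omega> \<partial>M)"
    using piece1(1) piece2(1) by (intro Bochner_Integration.integral_add) auto
  also have "\<dots> = (\<integral>t. indicator ({0<..1} \<inter> B) t * gamma_ratio_moment \<alpha> \<theta>1 \<theta>2 t (p1 t) q
          + indicator ({0<..<1} \<inter> B) t * gamma_ratio_moment \<alpha> \<theta>2 \<theta>1 t (p2 t) q \<partial>lborel)"
    using piece1(2,3) piece2(2,3) by (subst Bochner_Integration.integral_add) auto
  finally show ?thesis .
qed

lemma set_integral_scaled_log_max: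
  assumes "A \<in> sets (vimage_algebra (space M) min_max_ratio borel)"
  shows "(\<integral>\<omega>\<in>A. scaled_log_max \<omega> \<partial>M) = (\<integral>\<omega>\<in>A. cond_mean (min_max_ratio \<omega>) \<partial>M)"
proof -
  obtain B where [measurable]: "B \<in> sets borel" and A: "A = min_max_ratio -` B \<inter> space M"
    using assms by (auto simp: sets_vimage_algebra2)
  define SA where "SA = {0<..1} \<inter> B"
  define SB where "SB = {0<..<1} \<inter> B"
  have [measurable]: "SA \<in> sets borel" "SB \<in> sets borel" by (simp_all add: SA_def SB_def)
  have "(\<integral>\<omega>\<in>A. scaled_log_max \<omega> \<partial>M) = (\<integral>\<omega>. indicator B (min_max_ratio \<omega>) *
      (if X2 \<omega> \<le> X1 \<omega> then (\<lambda>_. - ln \<theta>1) (min_max_ratio \<omega>) + 1 * ln (X1 \<omega>)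
       else (\<lambda>_. - ln \<theta>2) (min_max_ratio \<omega>) + 1 * ln (X2 \<omega>)) \<partial>M)"
    unfolding set_lebesgue_integral_def A
    by (intro Bochner_Integration.integral_cong) (auto simp: indicator_def scaled_log_max_def max_def)
  also have "\<dots> = (\<integral>t. indicator SA t * gamma_ratio_moment \<alpha> \<theta>1 \<theta>2 t (- ln \<theta>1) 1
      + indicator SB t * gamma_ratio_moment \<alpha> \<theta>2 \<theta>1 t (- ln \<theta>2) 1 \<partial>lborel)"
    unfolding SA_def SB_def
    by (rule integral_indicator_ratio[where K = "\<bar>ln \<theta>1\<bar> + \<bar>ln \<theta>2\<bar>"]) auto
  also have "\<dots> = (\<integral>t. indicator SA t * gamma_ratio_moment \<alpha> \<theta>1 \<theta>2 t (cond_mean t) 0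
      + indicator SB t * gamma_ratio_moment \<alpha> \<theta>2 \<theta>1 t (cond_mean t) 0 \<partial>lborel)"
  proof (rule integral_cong_AE)
    show "AE t in lborel. indicator SA t * gamma_ratio_moment \<alpha> \<theta>1 \<theta>2 t (- ln \<theta>1) 1
        + indicator SB t * gamma_ratio_moment \<alpha> \<theta>2 \<theta>1 t (- ln \<theta>2) 1
      = indicator SA t * gamma_ratio_moment \<alpha> \<theta>1 \<theta>2 t (cond_mean t) 0
        + indicator SB t * gamma_ratio_moment \<alpha> \<theta>2 \<theta>1 t (cond_mean t) 0"
      using AE_lborel_singleton[of 1]
    proof eventually_elim
      case (elim t)
      then have "t \<in> SA \<longleftrightarrow> t \<in> SB" "t \<in> SA \<Longrightarrow> t > 0" by (auto simp: SA_def SB_def)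
      then show ?case
        using gamma_ratio_moment_log_balance[OF alpha_pos theta1_pos theta2_pos, of t]
        by (cases "t \<in> SA") (simp_all add: cond_mean_def)
    qed
  qed (unfold gamma_ratio_moment_def; measurable)+
  also have "\<dots> = (\<integral>\<omega>. indicator B (min_max_ratio \<omega>) *
      (if X2 \<omega> \<le> X1 \<omega> then cond_mean (min_max_ratio \<omega>) + 0 * ln (X1 \<omega>)
       else cond_mean (min_max_ratio \<omega>) + 0 * ln (X2 \<omega>)) \<partial>M)"
    unfolding SA_def SB_def
    by (rule integral_indicator_ratio[symmetric]) (auto intro: abs_cond_mean_le)
  also have "\<dots> = (\<integral>\<omega>\<in>A. cond_mean (min_max_ratio \<omega>) \<partial>M)"
    unfolding set_lebesgue_integral_def A
    by (intro Bochner_Integration.integral_cong) (auto simp: indicator_def)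
  finally show ?thesis .
qed

lemma AE_real_cond_exp_scaled_log_max:
  "AE \<omega> in M. real_cond_exp M (vimage_algebra (space M) min_max_ratio borel) scaled_log_max \<omega>
     = cond_mean (min_max_ratio \<omega>)"
proof -
  have "subalgebra M (vimage_algebra (space M) min_max_ratio borel)"
    using sets_image_in_sets[of M "space M" min_max_ratio borel] by (auto simp: subalgebra_def)
  then interpret finite_measure_subalgebra M "vimage_algebra (space M) min_max_ratio borel"
    by unfold_locales
  show ?thesis
  proof (rule real_cond_exp_charact)
    show "(\<lambda>\<omega>. cond_mean (min_max_ratio \<omega>)) \<in> borel_measurable (vimage_algebra (space M) min_max_ratio borel)"
      by (rule measurable_compose[OF measurable_vimage_algebra1]) auto
  qed (auto simp: set_integral_scaled_log_max integrable_scaled_log_max integrable_cond_mean_min_max_ratio)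
qed

end

theorem mainTheorem9:
  fixes M :: "'a measure" and X1 X2 :: "'a \<Rightarrow> real"
    and \<alpha> \<theta>1 \<theta>2 :: real
  assumes "prob_space M"
    and "0 < \<alpha>" and "0 < \<theta>1" and "0 < \<theta>2"
    and "distributed M lborel X1 (\<lambda>x. ennreal (gamma_dens \<alpha> \<theta>1 x))"
    and "distributed M lborel X2 (\<lambda>x. ennreal (gamma_dens \<alpha> \<theta>2 x))"
    and "prob_space.indep_var M borel X1 borel X2"
  defines "U \<equiv> (\<lambda>\<omega>. ln (max (X1 \<omega>) (X2 \<omega>))
                  - (if X1 \<omega> \<ge> X2 \<omega> then ln \<theta>1 else ln \<theta>2))"
    and "T \<equiv> (\<lambda>\<omega>. min (X1 \<omega>) (X2 \<omega>) / max (X1 \<omega>) (X2 \<omega>))"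
    and "\<mu> \<equiv> max \<theta>1 \<theta>2 / min \<theta>1 \<theta>2"
  shows "integrable M U
     \<and> (AE \<omega> in M. real_cond_exp M (vimage_algebra (space M) T borel) U \<omega>
                     = Digamma (2 * \<alpha>) - k_fun \<alpha> (T \<omega>) \<mu>)
     \<and> (\<forall>t\<in>{0<..1}. (SUP m\<in>{1..}. Digamma (2 * \<alpha>) - k_fun \<alpha> t m)
                       = Digamma (2 * \<alpha>) - ln (1 + t))"
proof -
  interpret gamma_pair M X1 X2 \<alpha> \<theta>1 \<theta>2
    using assms(1-7) by (simp add: gamma_pair_def gamma_pair_axioms_def)
  have "U = scaled_log_max" "T = min_max_ratio"
    by (simp_all add: fun_eq_iff U_def T_def scaled_log_max_def min_max_ratio_def)
  moreover have "Digamma (2 * \<alpha>) - k_fun \<alpha> t \<mu> = cond_mean t" for t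
    by (simp add: cond_mean_def \<mu>_def)
  ultimately show ?thesis
    using integrable_scaled_log_max AE_real_cond_exp_scaled_log_max SUP_Digamma_minus_k_fun[OF alpha_pos]
    by auto
qed

end
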